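(* Let $m\ge 2$ be an integer and let $T^{(1)}\neq T^{(2)}$ be two fixed binary strings of length $m$, each satisfying the non-self-overlap condition $T^{(s)}_{[1+k,m]}\neq T^{(s)}_{[1,m-k]}$ for all $k=1,\dots,m-1$. For an integer $M\ge m$, let $B$ be a random string uniformly distributed on $\{0,1\}^M$, and for $s=1,2$ let $$c^{(s)}=\#\left\{k\in\{1,\dots,M-m+1\}\ :\ B_{[k,k+m-1]}=T^{(s)}\right\}.$$ Put $\mu=\frac{M-m+1}{2^m}$ and $\sigma^2=M\left(\frac{1}{2^m}-\frac{2m-1}{2^{2m}}\right)$. For $k\in\{-(m-1),\dots,-1\}\cup\{1,\dots,m-1\}$ define $e_k=1$ if either $1\le k\le m-1$ and $T^{(1)}_{[1,m-k]}=T^{(2)}_{[1+k,m]}$, or $-m+1\le k\le -1$ and $T^{(1)}_{[1-k,m]}=T^{(2)}_{[1,m+k]}$; and $e_k=0$ otherwise. Then, with $m$, $T^{(1)}$, $T^{(2)}$ fixed, as $M\to\infty$, $$\mathbb{E}\left[\frac{c^{(1)}-\mu}{\sigma}\cdot\frac{c^{(2)}-\mu}{\sigma}\right]=\frac{-2m+1+\sum_{k=1}^{m-1}2^{m-k}\,(e_k+e_{-k})}{2^m-2m+1}+O\!\left(\frac{1}{M}\right).$$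
   Context: For a binary string $X$, $X_{[s,t]}$ denotes the substring of length $t-s+1$ consisting of the $s$-th through $t$-th bits of $X$. The quantity $c^{(s)}$ is the count of occurrences of the template $T^{(s)}$ in one block used in the NIST Non-overlapping Template Matching Test. *)

theory Defs
  imports "HOL-Probability.Probability" "HOL-Library.Landau_Symbols"
begin

text \<open>Substring X_[s,t] with 1-based indexing: the bits s through t (length t - s + 1).\<close>
definition substr :: "bool list \<Rightarrow> nat \<Rightarrow> nat \<Rightarrow> bool list" where
  "substr X s t = take (t + 1 - s) (drop (s - 1) X)"

definition non_overlapping :: "nat \<Rightarrow> bool list \<Rightarrow> bool" where
  "non_overlapping m T \<longleftrightarrow> (\<forall>k\<in>{1..m-1}. substr T (1+k) m \<noteq> substr T 1 (m-k))"

definition occ_count :: "nat \<Rightarrow> nat \<Rightarrow> bool list \<Rightarrow> bool list \<Rightarrow> nat" where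
  "occ_count M m T B = card {k \<in> {1..M-m+1}. substr B k (k+m-1) = T}"

definition cross_e :: "nat \<Rightarrow> bool list \<Rightarrow> bool list \<Rightarrow> int \<Rightarrow> real" where
  "cross_e m T1 T2 k =
     (if (1 \<le> k \<and> k \<le> int m - 1 \<and> substr T1 1 (m - nat k) = substr T2 (1 + nat k) m)
       \<or> (- int m + 1 \<le> k \<and> k \<le> -1 \<and> substr T1 (1 + nat (-k)) m = substr T2 1 (m - nat (-k)))
      then 1 else 0)"

end

(* Write c1 - mu and c2 - mu as sums, over the N = M - m + 1 windows, of centred occurrence
   indicators. The expected product of the centred indicators of T1 at window k and of T2 at
   window k + d depends only on d: it vanishes for |d| >= m, where the windows are disjoint and
   hence independent, and otherwise both templates occur iff B carries a single word of length
   m + |d|, which exists iff e_(-d) = 1 (never for d = 0, as T1 <> T2). Summing over all pairs of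
   windows, E[(c1 - mu) (c2 - mu)] = N * sum_d cov(d) - sum_d |d| cov(d), and sum_d cov(d) equals
   sigma^2 / M times the claimed limit; the second sum contributes the O(1/M) error. *)

theory Submission
  imports Defs
begin

lemma card_lists_fixed_nths:
  assumes "S \<subseteq> {..<n}"
  shows "card {xs :: 'a::finite list. length xs = n \<and> (\<forall>i\<in>S. xs ! i = f i)} = CARD('a) ^ (n - card S)"
proof -
  let ?A = "{xs :: 'a list. length xs = n \<and> (\<forall>i\<in>S. xs ! i = f i)}"
  let ?P = "PiE {..<n} (\<lambda>i. if i \<in> S then {f i} else UNIV)"
  have "bij_betw (\<lambda>xs. restrict (nth xs) {..<n}) ?A ?P"
    by (rule bij_betwI[where g = "\<lambda>g. map g [0..<n]"])
       (use assms in \<open>auto simp: PiE_iff extensional_def fun_eq_iff intro!: nth_equalityI split: if_splits\<close>)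
  then have "card ?A = (\<Prod>i<n. card (if i \<in> S then {f i} else (UNIV :: 'a set)))"
    by (simp add: bij_betw_same_card card_PiE)
  also have "\<dots> = (\<Prod>i<n. if i \<in> S then 1 else CARD('a))"
    by (rule prod.cong) auto
  also have "\<dots> = CARD('a) ^ card ({..<n} - S)"
    by (simp add: prod.If_cases Int_absorb1[OF assms] Diff_eq[symmetric])
  finally show ?thesis
    using assms by (simp add: card_Diff_subset finite_subset)
qed

lemma card_lists_two_fixed_nths:
  assumes "S1 \<union> S2 \<subseteq> {..<n}"
  shows "card {xs :: 'a::finite list. length xs = n \<and> (\<forall>i\<in>S1. xs ! i = f1 i) \<and> (\<forall>i\<in>S2. xs ! i = f2 i)}
    = (if \<forall>i\<in>S1 \<inter> S2. f1 i = f2 i then CARD('a) ^ (n - card (S1 \<union> S2)) else 0)"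
proof (cases "\<forall>i\<in>S1 \<inter> S2. f1 i = f2 i")
  case True
  then have "{xs :: 'a list. length xs = n \<and> (\<forall>i\<in>S1. xs ! i = f1 i) \<and> (\<forall>i\<in>S2. xs ! i = f2 i)}
    = {xs. length xs = n \<and> (\<forall>i\<in>S1 \<union> S2. xs ! i = (if i \<in> S1 then f1 i else f2 i))}"
    by auto
  then show ?thesis
    using True card_lists_fixed_nths[OF assms, of "\<lambda>i. if i \<in> S1 then f1 i else f2 i"] by simp
next
  case False
  then have empty: "{xs :: 'a list. length xs = n \<and> (\<forall>i\<in>S1. xs ! i = f1 i) \<and> (\<forall>i\<in>S2. xs ! i = f2 i)} = {}"
    by (auto, metis)
  show ?thesis
    unfolding empty using False by simp
qed

lemma finite_bool_lists: "finite {B :: bool list. length B = M}"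
  using finite_lists_length_eq[of "UNIV :: bool set" M] by simp

lemma card_bool_lists: "card {B :: bool list. length B = M} = 2 ^ M"
  using card_lists_length_eq[of "UNIV :: bool set" M] by simp

lemma shift_all_iff: "(\<forall>i<m. P (p + i) i) \<longleftrightarrow> (\<forall>i\<in>{p..<p + m}. P i (i - (p :: nat)))"
proof safe
  fix i assume all: "\<forall>i<m. P (p + i) i" and i: "i \<in> {p..<p + m}"
  then have "i - p < m"
    by auto
  then have "P (p + (i - p)) (i - p)"
    using all by blast
  with i show "P i (i - p)"
    by simp
next
  fix i assume all: "\<forall>i\<in>{p..<p + m}. P i (i - p)" and "i < m"
  then have "p + i \<in> {p..<p + m}"
    by simp
  then have "P (p + i) (p + i - p)"
    using all by blast
  then show "P (p + i) i"
    by simp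
qed

lemma sum_symmetric_interval:
  fixes h :: "int \<Rightarrow> 'a :: comm_monoid_add"
  shows "(\<Sum>d=- int n..int n. h d) = h 0 + (\<Sum>k=1..n. h (int k) + h (- int k))"
proof (induction n)
  case 0
  then show ?case by simp
next
  case (Suc n)
  have "{- int (Suc n)..int (Suc n)} = insert (int (Suc n)) (insert (- int (Suc n)) {- int n..int n})"
    by auto
  then show ?case
    using Suc by (simp add: add_ac)
qed

lemma double_sum_of_difference:
  fixes h :: "int \<Rightarrow> 'a :: comm_ring_1"
  assumes vanish: "\<And>d. r < \<bar>d\<bar> \<Longrightarrow> h d = 0" and "r \<le> int N"
  shows "(\<Sum>k=1..N. \<Sum>j=1..N. h (int j - int k)) = (\<Sum>d=-r..r. of_int (int N - \<bar>d\<bar>) * h d)"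
proof -
  let ?I = "{1..int N}" and ?D = "{-r..r}"
  have shift: "(\<Sum>j\<in>?I. h (j - k)) = (\<Sum>d\<in>?D. of_bool (k + d \<in> ?I) * h d)" for k
  proof -
    have "(\<Sum>j\<in>?I. h (j - k)) = (\<Sum>d\<in>{1 - k..int N - k}. h d)"
      by (rule sum.reindex_bij_witness[where i = "\<lambda>d. d + k" and j = "\<lambda>j. j - k"]) auto
    also have "\<dots> = (\<Sum>d\<in>?D. of_bool (k + d \<in> ?I) * h d)"
      by (rule sum.mono_neutral_cong) (use vanish in \<open>auto simp: image_iff\<close>)
    finally show ?thesis .
  qed
  have count: "(\<Sum>k\<in>?I. of_bool (k + d \<in> ?I)) = (of_int (int N - \<bar>d\<bar>) :: 'a)" if "d \<in> ?D" for d
  proof -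
    have "{k \<in> ?I. k + d \<in> ?I} = {max 1 (1 - d)..min (int N) (int N - d)}"
      by auto
    then show ?thesis
      using that \<open>r \<le> int N\<close> by (simp add: Int_def conj_commute max_def min_def abs_if)
  qed
  have nat_int: "(\<Sum>k=1..N. g (int k)) = (\<Sum>k\<in>?I. g k)" for g :: "int \<Rightarrow> 'a"
    by (rule sum.reindex_bij_witness[where i = nat and j = int]) auto
  have "(\<Sum>k=1..N. \<Sum>j=1..N. h (int j - int k)) = (\<Sum>k=1..N. \<Sum>j\<in>?I. h (j - int k))"
    by (rule sum.cong[OF refl], rule nat_int)
  also have "\<dots> = (\<Sum>k\<in>?I. \<Sum>j\<in>?I. h (j - k))"
    by (rule nat_int)
  also have "\<dots> = (\<Sum>d\<in>?D. (\<Sum>k\<in>?I. of_bool (k + d \<in> ?I)) * h d)"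
    by (simp only: shift sum.swap[of _ ?I] sum_distrib_right)
  also have "\<dots> = (\<Sum>d\<in>?D. of_int (int N - \<bar>d\<bar>) * h d)"
    by (rule sum.cong[OF refl]) (simp only: count)
  finally show ?thesis .
qed

lemma two_mult_le_two_power:
  assumes "1 \<le> n"
  shows "2 * n \<le> (2 :: nat) ^ n"
proof -
  obtain k where "n = Suc k"
    using assms by (cases n) auto
  then have "(2 :: nat) ^ n = 2 * 2 ^ k"
    by simp
  with \<open>n = Suc k\<close> less_exp[of k] show ?thesis
    by linarith
qed

lemma substr_eq_iff_nths:
  assumes "length T = m" "p + m \<le> length B"
  shows "substr B (Suc p) (p + m) = T \<longleftrightarrow> (\<forall>i\<in>{p..<p + m}. B ! i = T ! (i - p))"
proof -
  have "substr B (Suc p) (p + m) = take m (drop p B)"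
    unfolding substr_def by (simp add: algebra_simps)
  then have "substr B (Suc p) (p + m) = T \<longleftrightarrow> (\<forall>i<m. B ! (p + i) = T ! i)"
    using assms by (simp add: list_eq_iff_nth_eq)
  then show ?thesis
    using shift_all_iff[where P = "\<lambda>i j. B ! i = T ! j" and p = p and m = m] by simp
qed

lemma card_window_match:
  assumes "length T = m" "1 \<le> k" "k + m - 1 \<le> M"
  shows "card {B :: bool list. length B = M \<and> substr B k (k + m - 1) = T} = 2 ^ (M - m)"
proof -
  obtain p where k: "k = Suc p"
    using assms(2) by (cases k) auto
  have "{B :: bool list. length B = M \<and> substr B k (k + m - 1) = T}
      = {B. length B = M \<and> (\<forall>i\<in>{p..<p + m}. B ! i = T ! (i - p))}"
    using substr_eq_iff_nths[OF assms(1)] assms(3) k by auto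
  moreover have "{p..<p + m} \<subseteq> {..<M}"
    using assms(3) k by auto
  ultimately show ?thesis
    using card_lists_fixed_nths[of "{p..<p + m}" M "\<lambda>i. T ! (i - p)"] by simp
qed

lemma cross_e_uminus: "cross_e m T1 T2 (- k) = cross_e m T2 T1 k"
  unfolding cross_e_def by auto

lemma cross_e_uminus_of_nat:
  assumes "d < m" "length T1 = m" "length T2 = m"
  shows "cross_e m T1 T2 (- int d) = of_bool (0 < d \<and> drop d T1 = take (m - d) T2)"
  using assms unfolding cross_e_def substr_def by auto

(* Covariance of the occurrence indicators of T1 at window k and of T2 at window k + d. *)
definition window_cov :: "nat \<Rightarrow> bool list \<Rightarrow> bool list \<Rightarrow> int \<Rightarrow> real" where
  "window_cov m T1 T2 d =
     (if \<bar>d\<bar> < int m then cross_e m T1 T2 (- d) / 2 ^ (m + nat \<bar>d\<bar>) - 1 / 2 ^ (2 * m) else 0)"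

lemma window_cov_uminus: "window_cov m T1 T2 (- d) = window_cov m T2 T1 d"
  by (simp add: window_cov_def cross_e_uminus)

lemma window_cov_of_nat:
  assumes "length T1 = m" "length T2 = m" "T1 \<noteq> T2"
  shows "window_cov m T1 T2 (int d) = (if d < m
     then of_bool (drop d T1 = take (m - d) T2) / 2 ^ (m + d) - 1 / 2 ^ (2 * m) else 0)"
proof (cases "d = 0")
  case True
  then show ?thesis
    using assms by (simp add: window_cov_def cross_e_def)
next
  case False
  then show ?thesis
    using assms by (simp add: window_cov_def cross_e_uminus_of_nat)
qed

lemma card_two_windows_match_shift:
  assumes "length T1 = m" "length T2 = m" "T1 \<noteq> T2" "1 \<le> k" "k + d + m - 1 \<le> M"
  shows "real (card {B :: bool list. length B = M \<and> substr B k (k + m - 1) = T1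
                        \<and> substr B (k + d) (k + d + m - 1) = T2})
    = 2 ^ M * (1 / 2 ^ (2 * m) + window_cov m T1 T2 (int d))"
proof -
  obtain p where k: "k = Suc p"
    using assms(4) by (cases k) auto
  let ?S1 = "{p..<p + m}" and ?S2 = "{p + d..<p + d + m}"
  have "substr B k (k + m - 1) = T1 \<longleftrightarrow> (\<forall>i\<in>?S1. B ! i = T1 ! (i - p))"
    and "substr B (k + d) (k + d + m - 1) = T2 \<longleftrightarrow> (\<forall>i\<in>?S2. B ! i = T2 ! (i - (p + d)))"
    if "length B = M" for B
    using substr_eq_iff_nths[OF assms(1), of p B] substr_eq_iff_nths[OF assms(2), of "p + d" B]
      that assms(5) k by simp_all
  then have "{B :: bool list. length B = M \<and> substr B k (k + m - 1) = T1 \<and> substr B (k + d) (k + d + m - 1) = T2}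
    = {B. length B = M \<and> (\<forall>i\<in>?S1. B ! i = T1 ! (i - p)) \<and> (\<forall>i\<in>?S2. B ! i = T2 ! (i - (p + d)))}"
    by blast
  moreover have "?S1 \<union> ?S2 \<subseteq> {..<M}"
    using assms(5) k by auto
  ultimately have count: "card {B :: bool list. length B = M \<and> substr B k (k + m - 1) = T1
                        \<and> substr B (k + d) (k + d + m - 1) = T2}
    = (if \<forall>i\<in>?S1 \<inter> ?S2. T1 ! (i - p) = T2 ! (i - (p + d)) then 2 ^ (M - card (?S1 \<union> ?S2)) else 0)"
    using card_lists_two_fixed_nths[of ?S1 ?S2 M "\<lambda>i. T1 ! (i - p)" "\<lambda>i. T2 ! (i - (p + d))"] by simp
  show ?thesis
  proof (cases "d < m")
    case True
    have "?S1 \<inter> ?S2 = {p + d..<p + d + (m - d)}" "?S1 \<union> ?S2 = {p..<p + (m + d)}"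
      using True by auto
    moreover have "(\<forall>i\<in>{p + d..<p + d + (m - d)}. T1 ! (i - p) = T2 ! (i - (p + d)))
        \<longleftrightarrow> drop d T1 = take (m - d) T2"
      using shift_all_iff[where P = "\<lambda>i t. T1 ! (i - p) = T2 ! t" and p = "p + d" and m = "m - d"]
        assms(1,2) by (simp add: list_eq_iff_nth_eq add.commute)
    moreover have "m + d \<le> M"
      using assms(5) k by simp
    ultimately show ?thesis
      using True assms(1-3) count
      by (simp add: window_cov_of_nat power_diff[where 'a = real] power_add mult_2 field_simps)
  next
    case False
    have "?S1 \<inter> ?S2 = {}" "card (?S1 \<union> ?S2) = 2 * m"
      using False by (auto simp: card_Un_disjoint)
    moreover have "2 * m \<le> M"
      using assms(5) False k by simp
    ultimately show ?thesis
      using False assms(1-3) count by (simp add: window_cov_of_nat power_diff[where 'a = real])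
  qed
qed

lemma card_two_windows_match:
  assumes "length T1 = m" "length T2 = m" "T1 \<noteq> T2"
    and "1 \<le> k" "k + m - 1 \<le> M" "1 \<le> j" "j + m - 1 \<le> M"
  shows "real (card {B :: bool list. length B = M \<and> substr B k (k + m - 1) = T1 \<and> substr B j (j + m - 1) = T2})
    = 2 ^ M * (1 / 2 ^ (2 * m) + window_cov m T1 T2 (int j - int k))"
proof (cases "k \<le> j")
  case True
  then obtain d where "j = k + d"
    using le_Suc_ex by blast
  then show ?thesis
    using card_two_windows_match_shift[OF assms(1-4)] assms(7) by simp
next
  case False
  then obtain d where j: "k = j + d"
    using le_Suc_ex nat_le_linear by blast
  then have "int j - int k = - int d"
    by simp
  then show ?thesis
    using card_two_windows_match_shift[OF assms(2,1) assms(3)[symmetric] assms(6), of d M] assms(5) j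
    by (simp add: window_cov_uminus conj_commute)
qed

lemma sum_centered_window_indicators:
  assumes "length T1 = m" "length T2 = m" "T1 \<noteq> T2"
    and "1 \<le> k" "k + m - 1 \<le> M" "1 \<le> j" "j + m - 1 \<le> M"
  shows "(\<Sum>B | length B = M. (of_bool (substr B k (k + m - 1) = T1) - 1 / 2 ^ m)
                             * (of_bool (substr B j (j + m - 1) = T2) - 1 / 2 ^ m))
    = 2 ^ M * window_cov m T1 T2 (int j - int k)"
proof -
  let ?O = "{B :: bool list. length B = M}" and ?p = "1 / (2 :: real) ^ m"
  let ?a = "\<lambda>B. substr B k (k + m - 1) = T1" and ?b = "\<lambda>B. substr B j (j + m - 1) = T2"
  have "m \<le> M"
    using assms(4,5) by simp
  have p2: "?p\<^sup>2 = 1 / 2 ^ (2 * m)"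
    by (simp add: power_one_over flip: power_mult power_mult_distrib)
  have "?O \<inter> {B. ?a B} = {B. length B = M \<and> ?a B}" "?O \<inter> {B. ?b B} = {B. length B = M \<and> ?b B}"
    "?O \<inter> {B. ?a B \<and> ?b B} = {B. length B = M \<and> ?a B \<and> ?b B}"
    by auto
  then have sums: "(\<Sum>B\<in>?O. of_bool (?a B)) = 2 ^ M * ?p" "(\<Sum>B\<in>?O. of_bool (?b B)) = 2 ^ M * ?p"
      "(\<Sum>B\<in>?O. of_bool (?a B \<and> ?b B)) = 2 ^ M * (?p\<^sup>2 + window_cov m T1 T2 (int j - int k))"
    using card_window_match[OF assms(1,4,5)] card_window_match[OF assms(2,6,7)]
      card_two_windows_match[OF assms] finite_bool_lists \<open>m \<le> M\<close>
    by (simp_all add: p2 power_diff[where 'a = real])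
  have "(of_bool x - ?p) * (of_bool y - ?p) = of_bool (x \<and> y) - ?p * of_bool x - ?p * of_bool y + ?p\<^sup>2" for x y
    by (cases x; cases y) (simp_all add: algebra_simps power2_eq_square)
  then have "(\<Sum>B\<in>?O. (of_bool (?a B) - ?p) * (of_bool (?b B) - ?p))
      = (\<Sum>B\<in>?O. of_bool (?a B \<and> ?b B)) - ?p * (\<Sum>B\<in>?O. of_bool (?a B))
        - ?p * (\<Sum>B\<in>?O. of_bool (?b B)) + real (card ?O) * ?p\<^sup>2"
    by (simp add: sum.distrib sum_subtractf sum_distrib_left)
  also have "\<dots> = 2 ^ M * window_cov m T1 T2 (int j - int k)"
    unfolding sums card_bool_lists by (simp add: algebra_simps power2_eq_square)
  finally show ?thesis .
qed

lemma occ_count_centered: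
  "real (occ_count M m T B) - real (M - m + 1) / 2 ^ m
    = (\<Sum>k=1..M - m + 1. of_bool (substr B k (k + m - 1) = T) - 1 / 2 ^ m)"
proof -
  define N where "N = M - m + 1"
  have "real (occ_count M m T B) = (\<Sum>k=1..N. of_bool (substr B k (k + m - 1) = T))"
    unfolding occ_count_def N_def[symmetric] by (simp add: Int_def conj_commute)
  then show ?thesis
    unfolding N_def[symmetric] by (simp add: sum_subtractf)
qed

lemma sum_centered_occ_count_product:
  assumes "m \<le> M" "length T1 = m" "length T2 = m" "T1 \<noteq> T2"
  shows "(\<Sum>B | length B = M. (real (occ_count M m T1 B) - real (M - m + 1) / 2 ^ m)
                             * (real (occ_count M m T2 B) - real (M - m + 1) / 2 ^ m))
    = 2 ^ M * (\<Sum>k=1..M - m + 1. \<Sum>j=1..M - m + 1. window_cov m T1 T2 (int j - int k))"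
proof -
  define N where "N = M - m + 1"
  let ?a = "\<lambda>k B. of_bool (substr B k (k + m - 1) = T1) - 1 / (2 :: real) ^ m"
  let ?b = "\<lambda>j B. of_bool (substr B j (j + m - 1) = T2) - 1 / (2 :: real) ^ m"
  have "(\<Sum>B | length B = M. (real (occ_count M m T1 B) - real N / 2 ^ m)
                             * (real (occ_count M m T2 B) - real N / 2 ^ m))
      = (\<Sum>B | length B = M. \<Sum>k=1..N. \<Sum>j=1..N. ?a k B * ?b j B)"
    unfolding N_def occ_count_centered by (simp only: sum_product)
  also have "\<dots> = (\<Sum>k=1..N. \<Sum>j=1..N. \<Sum>B | length B = M. ?a k B * ?b j B)"
    by (subst sum.swap) (rule sum.cong[OF refl], rule sum.swap)
  also have "\<dots> = (\<Sum>k=1..N. \<Sum>j=1..N. 2 ^ M * window_cov m T1 T2 (int j - int k))"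
    using assms by (intro sum.cong refl sum_centered_window_indicators) (auto simp: N_def)
  finally show ?thesis
    unfolding N_def by (simp only: sum_distrib_left)
qed

lemma sum_window_cov:
  assumes "1 \<le> m"
  shows "(\<Sum>d=-(int m - 1)..int m - 1. window_cov m T1 T2 d)
    = (- 2 * real m + 1 + (\<Sum>k=1..m-1. 2 ^ (m - k) * (cross_e m T1 T2 (int k) + cross_e m T1 T2 (- int k))))
      / 2 ^ (2 * m)"
proof -
  let ?e = "\<lambda>k. cross_e m T1 T2 (int k) + cross_e m T1 T2 (- int k)"
  have pair: "window_cov m T1 T2 (int k) + window_cov m T1 T2 (- int k) = (2 ^ (m - k) * ?e k - 2) / 2 ^ (2 * m)"
    if "k \<in> {1..m-1}" for k
  proof -
    have "k < m"
      using that by auto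
    then have "2 * m = (m + k) + (m - k)"
      by simp
    then have "(2 :: real) ^ (2 * m) = 2 ^ (m + k) * 2 ^ (m - k)"
      by (metis power_add)
    then show ?thesis
      using \<open>k < m\<close> by (simp add: window_cov_def diff_divide_distrib add_divide_distrib)
  qed
  have "(\<Sum>d=-(int m - 1)..int m - 1. window_cov m T1 T2 d) = (\<Sum>d=- int (m - 1)..int (m - 1). window_cov m T1 T2 d)"
    using assms by (simp add: of_nat_diff)
  also have "\<dots> = window_cov m T1 T2 0 + (\<Sum>k=1..m-1. window_cov m T1 T2 (int k) + window_cov m T1 T2 (- int k))"
    by (rule sum_symmetric_interval)
  also have "\<dots> = window_cov m T1 T2 0 + (\<Sum>k=1..m-1. (2 ^ (m - k) * ?e k - 2) / 2 ^ (2 * m))"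
    using pair by (intro arg_cong[where f = "\<lambda>x. window_cov m T1 T2 0 + x"] sum.cong) auto
  finally have "(\<Sum>d=-(int m - 1)..int m - 1. window_cov m T1 T2 d)
      = window_cov m T1 T2 0 + (\<Sum>k=1..m-1. (2 ^ (m - k) * ?e k - 2) / 2 ^ (2 * m))" .
  moreover have "window_cov m T1 T2 0 = - 1 / 2 ^ (2 * m)"
    using assms by (simp add: window_cov_def cross_e_def)
  moreover have "(\<Sum>k=1..m-1. (2 ^ (m - k) * ?e k - 2) / (2 :: real) ^ (2 * m))
      = ((\<Sum>k=1..m-1. 2 ^ (m - k) * ?e k) - 2 * (real m - 1)) / 2 ^ (2 * m)"
    using assms by (simp add: sum_subtractf flip: sum_divide_distrib diff_divide_distrib)
  ultimately show ?thesis
    by (simp add: add_divide_distrib diff_divide_distrib)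
qed

lemma expectation_centered_occ_product:
  assumes "2 * m \<le> M" "length T1 = m" "length T2 = m" "T1 \<noteq> T2"
  shows "measure_pmf.expectation (pmf_of_set {B. length B = M})
           (\<lambda>B. (real (occ_count M m T1 B) - (real M - real m + 1) / 2 ^ m)
              * (real (occ_count M m T2 B) - (real M - real m + 1) / 2 ^ m))
    = (\<Sum>d=-(int m - 1)..int m - 1. of_int (int (M - m + 1) - \<bar>d\<bar>) * window_cov m T1 T2 d)"
proof -
  define N where "N = M - m + 1"
  have nonempty: "{B :: bool list. length B = M} \<noteq> {}"
    using length_replicate[of M False] by blast
  have "real M - real m + 1 = real N"
    using assms(1) by (simp add: N_def)
  then have "measure_pmf.expectation (pmf_of_set {B. length B = M})
           (\<lambda>B. (real (occ_count M m T1 B) - (real M - real m + 1) / 2 ^ m)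
              * (real (occ_count M m T2 B) - (real M - real m + 1) / 2 ^ m))
    = (\<Sum>k=1..N. \<Sum>j=1..N. window_cov m T1 T2 (int j - int k))"
    using sum_centered_occ_count_product[of m M T1 T2, folded N_def] assms
    by (simp add: integral_pmf_of_set[OF nonempty finite_bool_lists] card_bool_lists)
  also have "\<dots> = (\<Sum>d=-(int m - 1)..int m - 1. of_int (int N - \<bar>d\<bar>) * window_cov m T1 T2 d)"
  proof (rule double_sum_of_difference)
    show "window_cov m T1 T2 d = 0" if "int m - 1 < \<bar>d\<bar>" for d
      using that by (simp add: window_cov_def)
    show "int m - 1 \<le> int N"
      using assms(1) by (simp add: N_def)
  qed
  finally show ?thesis
    unfolding N_def .
qed

lemma expectation_normalized_occ_product:
  assumes "2 * m \<le> M" "length T1 = m" "length T2 = m" "T1 \<noteq> T2"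
  defines "\<mu> \<equiv> (real M - real m + 1) / 2 ^ m"
    and "\<sigma> \<equiv> sqrt (real M * (1 / 2 ^ m - (2 * real m - 1) / 2 ^ (2 * m)))"
  shows "measure_pmf.expectation (pmf_of_set {B. length B = M})
           (\<lambda>B. ((real (occ_count M m T1 B) - \<mu>) / \<sigma>) * ((real (occ_count M m T2 B) - \<mu>) / \<sigma>))
    = (\<Sum>d=-(int m - 1)..int m - 1. of_int (int (M - m + 1) - \<bar>d\<bar>) * window_cov m T1 T2 d) / \<sigma>\<^sup>2"
proof -
  have "(\<lambda>B. ((real (occ_count M m T1 B) - \<mu>) / \<sigma>) * ((real (occ_count M m T2 B) - \<mu>) / \<sigma>))
      = (\<lambda>B. (real (occ_count M m T1 B) - \<mu>) * (real (occ_count M m T2 B) - \<mu>) / \<sigma>\<^sup>2)"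
    by (simp add: power2_eq_square)
  then show ?thesis
    using expectation_centered_occ_product[OF assms(1-4)] by (simp only: integral_divide_zero \<mu>_def)
qed

theorem mainTheorem1:
  fixes m :: nat and T1 T2 :: "bool list"
  assumes "m \<ge> 2"
    and "length T1 = m" and "length T2 = m" and "T1 \<noteq> T2"
    and "non_overlapping m T1" and "non_overlapping m T2"
  shows "(\<lambda>M::nat.
            measure_pmf.expectation (pmf_of_set {B. length B = M})
              (\<lambda>B. ((real (occ_count M m T1 B) - (real M - real m + 1) / 2 ^ m)
                     / sqrt (real M * (1 / 2 ^ m - (2 * real m - 1) / 2 ^ (2 * m))))
                  * ((real (occ_count M m T2 B) - (real M - real m + 1) / 2 ^ m)
                     / sqrt (real M * (1 / 2 ^ m - (2 * real m - 1) / 2 ^ (2 * m)))))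
          - (- 2 * real m + 1
             + (\<Sum>k=1..m-1. 2 ^ (m - k) * (cross_e m T1 T2 (int k) + cross_e m T1 T2 (- int k))))
            / (2 ^ m - 2 * real m + 1))
         \<in> O(\<lambda>M. 1 / real M)"
proof -
  define K where "K = 1 / 2 ^ m - (2 * real m - 1) / (2 :: real) ^ (2 * m)"
  define L where "L = (- 2 * real m + 1
    + (\<Sum>k=1..m-1. 2 ^ (m - k) * (cross_e m T1 T2 (int k) + cross_e m T1 T2 (- int k)))) / (2 ^ m - 2 * real m + 1)"
  define R where "R = (\<Sum>d=-(int m - 1)..int m - 1. \<bar>d\<bar> * window_cov m T1 T2 d)"
  have "real (2 * m) \<le> real (2 ^ m)"
    using two_mult_le_two_power[of m] assms(1) by (simp only: of_nat_le_iff)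
  then have pos: "0 < 2 ^ m - 2 * real m + 1"
    by simp
  have "(2 :: real) ^ (2 * m) = 2 ^ m * 2 ^ m"
    by (simp add: power_add mult_2)
  then have K: "K = (2 ^ m - 2 * real m + 1) / 2 ^ (2 * m)"
    by (simp add: K_def diff_divide_distrib add_divide_distrib)
  with pos have "0 < K"
    by simp
  have H: "(\<Sum>d=-(int m - 1)..int m - 1. window_cov m T1 T2 d) = K * L"
    using sum_window_cov[of m T1 T2] assms(1) pos unfolding K L_def by simp
  have S: "(\<Sum>d=-(int m - 1)..int m - 1. of_int (int N - \<bar>d\<bar>) * window_cov m T1 T2 d) = real N * (K * L) - R" for N
    unfolding R_def H[symmetric] by (simp add: left_diff_distrib sum_subtractf sum_distrib_left)
  have "\<bar>measure_pmf.expectation (pmf_of_set {B. length B = M})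
          (\<lambda>B. ((real (occ_count M m T1 B) - (real M - real m + 1) / 2 ^ m)
                 / sqrt (real M * (1 / 2 ^ m - (2 * real m - 1) / 2 ^ (2 * m))))
              * ((real (occ_count M m T2 B) - (real M - real m + 1) / 2 ^ m)
                 / sqrt (real M * (1 / 2 ^ m - (2 * real m - 1) / 2 ^ (2 * m))))) - L\<bar>
      \<le> \<bar>(1 - real m) * L - R / K\<bar> * \<bar>1 / real M\<bar>" if "2 * m \<le> M" for M
  proof -
    have "(sqrt (real M * (1 / 2 ^ m - (2 * real m - 1) / 2 ^ (2 * m))))\<^sup>2 = real M * K"
      unfolding K_def[symmetric] using \<open>0 < K\<close> by simp
    moreover have "(real (M - m + 1) * (K * L) - R) / (real M * K) - L = ((1 - real m) * L - R / K) * (1 / real M)"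
      using that assms(1) \<open>0 < K\<close> by (simp add: of_nat_diff field_simps)
    ultimately show ?thesis
      unfolding expectation_normalized_occ_product[OF that assms(2-4)] S abs_mult by simp
  qed
  then show ?thesis
    by (intro bigoI eventually_mono[OF eventually_ge_at_top[of "2 * m"]]) (simp add: L_def)
qed

end
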